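(* Assume $f$ has a unique global maximizer, contains no weak epistasis, and every order-1 epistasis of $f$ is strict. Then every directed cycle of the epistatic graph lies in a clique: if $v_0\rightarrow v_1\rightarrow\cdots\rightarrow v_{c-1}\rightarrow v_0$ is a directed cycle, then $v_a\rightarrow v_b$ for all distinct $a,b\in\{0,\dots,c-1\}$.
   Context: Fix $\ell\ge1$, loci $V=\{0,\dots,\ell-1\}$, chromosomes $\vec y\in\{0,1\}^V$, fitness $f:\{0,1\}^V\to\mathbb R$ (maximized) with unique global maximizer $g$. An assignment $A$ is a set of pairs $(v,a)$ with at most one pair per locus; coverage $\mathcal C(A)$; $A[v]$ its allele at $v$. $\Psi_A$ is the set of chromosomes agreeing with $A$ on $\mathcal C(A)$ with maximum fitness among such chromosomes; $\Psi_A[v]=\{\psi_v:\psi\in\Psi_A\}$. Epistasis: for $v\in V$ and nonempty $S\subseteq V\setminus\{v\}$, $S\Rightarrow v$ iff for every $s\in S$ there exists an assignment $A$ with $\mathcal C(A)=S$ and $\Psi_A[v]\neq\Psi_{A\setminus\{(s,A[s])\}}[v]$. An epistasis $S\Rightarrow v$ with $|S|\ge2$ is weak if no nonempty proper subset $T\subsetneq S$ has $T\Rightarrow v$. An order-1 epistasis $\{u\}\Rightarrow v$ is strict, written $u\rightarrow v$, if $\Psi_{\{(u,1-g[u])\}}[v]=\{1-g[v]\}$. The epistatic graph is the directed graph on $V$ with edge $u\to v$ iff $\{u\}\Rightarrow v$. A clique is a set of vertices $C$ with $a\rightarrow b$ for all distinct $a,b\in C$. *)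

theory Defs
  imports Complex_Main
begin

text \<open>Loci are V = {0..<l}. Alleles 0/1 are encoded as False/True.
  An assignment is a partial map nat => bool option with domain inside V
  (at most one allele per locus); its coverage is its domain.\<close>

definition chroms :: "nat \<Rightarrow> (nat \<Rightarrow> bool) set" where
  "chroms l = {y. \<forall>v. v \<notin> {0..<l} \<longrightarrow> y v = False}"

definition agrees :: "(nat \<Rightarrow> bool) \<Rightarrow> (nat \<Rightarrow> bool option) \<Rightarrow> bool" where
  "agrees y A \<longleftrightarrow> (\<forall>v a. A v = Some a \<longrightarrow> y v = a)"

definition Psi :: "nat \<Rightarrow> ((nat \<Rightarrow> bool) \<Rightarrow> real) \<Rightarrow> (nat \<Rightarrow> bool option) \<Rightarrow> (nat \<Rightarrow> bool) set" where
  "Psi l f A = {y \<in> chroms l. agrees y A \<and>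
                  (\<forall>z \<in> chroms l. agrees z A \<longrightarrow> f z \<le> f y)}"

definition Psi_at :: "nat \<Rightarrow> ((nat \<Rightarrow> bool) \<Rightarrow> real) \<Rightarrow> (nat \<Rightarrow> bool option) \<Rightarrow> nat \<Rightarrow> bool set" where
  "Psi_at l f A v = (\<lambda>y. y v) ` Psi l f A"

definition epistasis :: "nat \<Rightarrow> ((nat \<Rightarrow> bool) \<Rightarrow> real) \<Rightarrow> nat set \<Rightarrow> nat \<Rightarrow> bool" where
  "epistasis l f S v \<longleftrightarrow> v \<in> {0..<l} \<and> S \<noteq> {} \<and> S \<subseteq> {0..<l} - {v} \<and>
     (\<forall>s \<in> S. \<exists>A. dom A = S \<and> Psi_at l f A v \<noteq> Psi_at l f (A(s := None)) v)"

definition weak_epistasis :: "nat \<Rightarrow> ((nat \<Rightarrow> bool) \<Rightarrow> real) \<Rightarrow> nat set \<Rightarrow> nat \<Rightarrow> bool" where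
  "weak_epistasis l f S v \<longleftrightarrow> epistasis l f S v \<and> card S \<ge> 2 \<and>
     \<not> (\<exists>T. T \<noteq> {} \<and> T \<subset> S \<and> epistasis l f T v)"

definition unique_max :: "nat \<Rightarrow> ((nat \<Rightarrow> bool) \<Rightarrow> real) \<Rightarrow> (nat \<Rightarrow> bool) \<Rightarrow> bool" where
  "unique_max l f g \<longleftrightarrow> g \<in> chroms l \<and> (\<forall>y \<in> chroms l. y \<noteq> g \<longrightarrow> f y < f g)"

definition strict_epi :: "nat \<Rightarrow> ((nat \<Rightarrow> bool) \<Rightarrow> real) \<Rightarrow> (nat \<Rightarrow> bool) \<Rightarrow> nat \<Rightarrow> nat \<Rightarrow> bool" where
  "strict_epi l f g u v \<longleftrightarrow> epistasis l f {u} v \<and>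
     Psi_at l f (Map.empty(u \<mapsto> \<not> g u)) v = {\<not> g v}"

end

theory Submission
  imports Defs
begin

text \<open>Let \<open>M\<^sub>i\<close> be the set of best chromosomes once locus \<open>v\<^sub>i\<close> is forced to its
  non-optimal allele. Strictness of \<open>v\<^sub>i \<rightarrow> v\<^sub>i\<^sub>+\<^sub>1\<close> says every member of \<open>M\<^sub>i\<close> also carries
  the non-optimal allele at \<open>v\<^sub>i\<^sub>+\<^sub>1\<close>, so it competes in the problem defining \<open>M\<^sub>i\<^sub>+\<^sub>1\<close>: the
  optimal values can only increase along the cycle, hence they are all equal, and then
  \<open>M\<^sub>i \<subseteq> M\<^sub>i\<^sub>+\<^sub>1\<close>. Going around the cycle, all \<open>M\<^sub>i\<close> coincide, so forcing \<open>v\<^sub>a\<close> forces the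
  non-optimal allele at every \<open>v\<^sub>b\<close>; since without constraints the optimum is \<open>g\<close>, this is
  a strict epistasis \<open>v\<^sub>a \<rightarrow> v\<^sub>b\<close>.\<close>

lemma agrees_single [simp]: "agrees y [u \<mapsto> a] \<longleftrightarrow> y u = a"
  unfolding agrees_def by auto

lemma Psi_at_eq_singleton:
  "Psi_at l f A v = {a} \<longleftrightarrow> Psi l f A \<noteq> {} \<and> (\<forall>y \<in> Psi l f A. y v = a)"
proof -
  have "h ` S = {a} \<longleftrightarrow> S \<noteq> {} \<and> (\<forall>y \<in> S. h y = a)" for h :: "(nat \<Rightarrow> bool) \<Rightarrow> bool" and S
    by auto
  then show ?thesis
    unfolding Psi_at_def .
qed

lemma Psi_at_single:
  assumes "Psi l f [u \<mapsto> a] \<noteq> {}"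
  shows "Psi_at l f [u \<mapsto> a] u = {a}"
  using assms unfolding Psi_at_eq_singleton Psi_def by simp

lemma Psi_at_eq_singleton_subset:
  assumes "Psi l f A \<subseteq> Psi l f B" "Psi l f A \<noteq> {}" "Psi_at l f B v = {a}"
  shows "Psi_at l f A v = {a}"
proof -
  have "Psi_at l f A v \<subseteq> Psi_at l f B v"
    unfolding Psi_at_def using assms(1) by (rule image_mono)
  moreover have "Psi_at l f A v \<noteq> {}"
    unfolding Psi_at_def using assms(2) by simp
  ultimately show ?thesis
    using assms(3) by (simp add: subset_singleton_iff)
qed

lemma Psi_empty_unique_max:
  assumes "unique_max l f g"
  shows "Psi l f Map.empty = {g}"
  using assms unfolding unique_max_def Psi_def agrees_def by (force simp: not_le le_less)

lemma Psi_fitness_le: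
  assumes "y \<in> Psi l f A" "agrees y B" "z \<in> Psi l f B"
  shows "f y \<le> f z"
  using assms unfolding Psi_def by blast

lemma Psi_mem_of_fitness_ge:
  assumes "y \<in> Psi l f A" "agrees y B" "z \<in> Psi l f B" "f z \<le> f y"
  shows "y \<in> Psi l f B"
  using assms unfolding Psi_def by force

lemma strict_epi_pins:
  assumes "strict_epi l f g u v"
  shows "Psi l f [u \<mapsto> \<not> g u] \<noteq> {}" "\<forall>y \<in> Psi l f [u \<mapsto> \<not> g u]. y v = (\<not> g v)"
  using assms unfolding strict_epi_def Psi_at_eq_singleton by simp_all

text \<open>The epistasis itself comes for free: the unconstrained optimum is \<open>g\<close>, which
  carries the other allele at \<open>v\<close>.\<close>

lemma strict_epiI:
  assumes "unique_max l f g" "u < l" "v < l" "u \<noteq> v"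
    and pinned: "Psi_at l f [u \<mapsto> \<not> g u] v = {\<not> g v}"
  shows "strict_epi l f g u v"
proof -
  have "[u \<mapsto> \<not> g u](u := None) = Map.empty"
    by (rule ext) simp
  moreover have "Psi_at l f Map.empty v = {g v}"
    unfolding Psi_at_def Psi_empty_unique_max[OF \<open>unique_max l f g\<close>] by simp
  ultimately have "Psi_at l f [u \<mapsto> \<not> g u] v \<noteq> Psi_at l f ([u \<mapsto> \<not> g u](u := None)) v"
    using pinned by simp
  then have "epistasis l f {u} v"
    unfolding epistasis_def using assms(2-4) by auto
  with pinned show ?thesis
    unfolding strict_epi_def by simp
qed

lemma cyclic_relation_closure:
  fixes R :: "nat \<Rightarrow> nat \<Rightarrow> bool"
  assumes "c > 0"
    and trans: "\<And>i j k. i < c \<Longrightarrow> j < c \<Longrightarrow> k < c \<Longrightarrow> R i j \<Longrightarrow> R j k \<Longrightarrow> R i k"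
    and step: "\<And>i. i < c \<Longrightarrow> R i (Suc i mod c)"
    and "i < c" "j < c"
  shows "R i j"
proof -
  have reach: "R i ((i + Suc k) mod c)" for k
  proof (induction k)
    case 0
    show ?case using step[OF \<open>i < c\<close>] by simp
  next
    case (Suc k)
    have "(i + Suc (Suc k)) mod c = Suc ((i + Suc k) mod c) mod c"
      by (simp add: mod_Suc_eq)
    then show ?case
      using trans[OF \<open>i < c\<close> _ _ Suc step] \<open>c > 0\<close> by simp
  qed
  have "(i + Suc (j + c - i - 1)) mod c = j"
    using \<open>i < c\<close> \<open>j < c\<close> by simp
  then show ?thesis using reach by metis
qed

lemma Psi_single_subset_on_strict_cycle:
  assumes "c > 0"
    and edges: "\<And>i. i < c \<Longrightarrow> strict_epi l f g (vs i) (vs (Suc i mod c))"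
    and "i < c" "j < c"
  shows "Psi l f [vs i \<mapsto> \<not> g (vs i)] \<subseteq> Psi l f [vs j \<mapsto> \<not> g (vs j)]"
proof -
  define M where "M k = Psi l f [vs k \<mapsto> \<not> g (vs k)]" for k
  have nonempty: "M k \<noteq> {}" if "k < c" for k
    using strict_epi_pins(1)[OF edges[OF that]] by (simp add: M_def)
  have succ_agrees: "agrees y [vs (Suc k mod c) \<mapsto> \<not> g (vs (Suc k mod c))]"
    if "k < c" "y \<in> M k" for k y
    using strict_epi_pins(2)[OF edges[OF that(1)]] that(2) by (simp add: M_def)
  have succ_mod: "Suc k mod c < c" for k
    using \<open>c > 0\<close> by simp
  have fitness_le: "\<forall>y \<in> M i. \<forall>z \<in> M j. f y \<le> f z" if "i < c" "j < c" for i j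
  proof (rule cyclic_relation_closure[of c "\<lambda>i j. \<forall>y \<in> M i. \<forall>z \<in> M j. f y \<le> f z", OF \<open>c > 0\<close> _ _ that])
    fix i j k
    assume "j < c" and ij: "\<forall>y \<in> M i. \<forall>z \<in> M j. f y \<le> f z" and jk: "\<forall>y \<in> M j. \<forall>z \<in> M k. f y \<le> f z"
    obtain w where "w \<in> M j" using nonempty[OF \<open>j < c\<close>] by blast
    then show "\<forall>y \<in> M i. \<forall>z \<in> M k. f y \<le> f z"
      using ij jk by (meson order_trans)
  next
    fix i assume "i < c"
    show "\<forall>y \<in> M i. \<forall>z \<in> M (Suc i mod c). f y \<le> f z"
      using Psi_fitness_le succ_agrees[OF \<open>i < c\<close>] unfolding M_def by blast
  qed
  have "M i \<subseteq> M j"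
  proof (rule cyclic_relation_closure[of c "\<lambda>i j. M i \<subseteq> M j", OF \<open>c > 0\<close> _ _ assms(3,4)])
    fix i assume "i < c"
    show "M i \<subseteq> M (Suc i mod c)"
    proof
      fix y assume "y \<in> M i"
      obtain z where "z \<in> M (Suc i mod c)" using nonempty[OF succ_mod] by blast
      then show "y \<in> M (Suc i mod c)"
        using Psi_mem_of_fitness_ge[of y l f _ _ z] \<open>y \<in> M i\<close> succ_agrees[OF \<open>i < c\<close> \<open>y \<in> M i\<close>]
          fitness_le[OF succ_mod \<open>i < c\<close>] unfolding M_def by blast
    qed
  qed blast
  then show ?thesis
    by (simp add: M_def)
qed

theorem lemma7:
  fixes l :: nat and f :: "(nat \<Rightarrow> bool) \<Rightarrow> real" and g :: "nat \<Rightarrow> bool"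
    and c :: nat and vs :: "nat \<Rightarrow> nat"
  assumes "l \<ge> 1"
    and "unique_max l f g"
    and "\<forall>S v. \<not> weak_epistasis l f S v"
    and "\<forall>u v. epistasis l f {u} v \<longrightarrow> strict_epi l f g u v"
    and "c \<ge> 1"
    and "inj_on vs {0..<c}"
    and "\<forall>i < c. epistasis l f {vs i} (vs ((i + 1) mod c))"
  shows "\<forall>a < c. \<forall>b < c. a \<noteq> b \<longrightarrow> strict_epi l f g (vs a) (vs b)"
proof (intro allI impI)
  fix a b assume "a < c" "b < c" "a \<noteq> b"
  have edges: "strict_epi l f g (vs i) (vs (Suc i mod c))" if "i < c" for i
    using assms(4,7) that by simp
  have loci: "vs i < l" if "i < c" for i
    using assms(7) that unfolding epistasis_def by auto
  have "Psi l f [vs a \<mapsto> \<not> g (vs a)] \<subseteq> Psi l f [vs b \<mapsto> \<not> g (vs b)]"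
    using Psi_single_subset_on_strict_cycle[of c l f g vs, OF _ edges \<open>a < c\<close> \<open>b < c\<close>] assms(5)
    by simp
  then have "Psi_at l f [vs a \<mapsto> \<not> g (vs a)] (vs b) = {\<not> g (vs b)}"
    using strict_epi_pins(1)[OF edges[OF \<open>a < c\<close>]]
      Psi_at_single[OF strict_epi_pins(1)[OF edges[OF \<open>b < c\<close>]]]
    by (rule Psi_at_eq_singleton_subset)
  moreover have "vs a \<noteq> vs b"
    using \<open>a < c\<close> \<open>b < c\<close> \<open>a \<noteq> b\<close> assms(6) by (auto dest: inj_onD)
  ultimately show "strict_epi l f g (vs a) (vs b)"
    using strict_epiI[OF assms(2)] loci \<open>a < c\<close> \<open>b < c\<close> by blast
qed

end
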